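(* Let $P_0$ be a probability distribution on $\mathbb{R}^{d_0}$ with compact support $S$, let $\epsilon>0$, and let $\mathcal{P}(P_0,\epsilon)=\{P : W_\infty(P_0,P)\le \epsilon\}$. Let $g:\mathbb{R}^{d_0}\to\mathbb{R}^{d}$ ($d<d_0$) be continuous with a continuous map $g^{-1}:\mathbb{R}^d\to\mathbb{R}^{d_0}$, and let $\ell(\bm\theta,\cdot):\mathbb{R}^{d_0}\to[0,M]$ be a continuous loss satisfying the on-manifold assumption $\ell(\bm\theta,\bm x)=\ell(\bm\theta,g^{-1}(g(\bm x)))$ for all $\bm x\in\mathbb{R}^{d_0}$. Define $$\epsilon_z=\sup_{\bm x\in S}\ \sup_{\|\bm\delta_x\|_\infty\le\epsilon}\|g(\bm x)-g(\bm x+\bm\delta_x)\|_\infty .$$ Then $$\sup_{P\in\mathcal{P}(P_0,\epsilon)}\mathbb{E}_{\bm x'\sim P}[\ell(\bm\theta,\bm x')]\ \le\ \mathbb{E}_{\bm x\sim P_0}\Big[\sup_{\|\bm\delta_z\|_\infty\le\epsilon_z}\ell\big(\bm\theta,g^{-1}(g(\bm x)+\bm\delta_z)\big)\Big].$$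
   Context: $W_\infty$ denotes the $\infty$-Wasserstein distance, $W_\infty(P,Q)=\inf_{\lambda\in\Lambda(P,Q)}\operatorname{ess\,sup}_{(x,y)\sim\lambda}\|x-y\|_\infty$, where $\Lambda(P,Q)$ is the set of couplings of $P$ and $Q$. The loss $\ell(\bm\theta,\bm x)=\mathbb{E}_{y\sim P_{y\mid\bm x}}[\mathcal{L}(\bm\theta,\bm x,y)]$ is the expected classification loss of a model with parameters $\bm\theta$ at input $\bm x$; $\bm\theta$ is fixed throughout. The map $g$ is a projection onto a lower-dimensional "primary feature" (latent) space and $g^{-1}$ a reconstruction map; the on-manifold assumption says reconstruction preserves the loss for all inputs, including those from distributions in $\mathcal{P}(P_0,\epsilon)$. *)

theory Defs
  imports "HOL-Probability.Probability"
begin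

definition prob_distr :: "'a::euclidean_space measure \<Rightarrow> bool" where
  "prob_distr P \<longleftrightarrow> prob_space P \<and> sets P = sets (borel :: 'a measure)"

definition couplings :: "'a::euclidean_space measure \<Rightarrow> 'a measure \<Rightarrow> ('a \<times> 'a) measure set" where
  "couplings P Q = {L. prob_space L \<and> sets L = sets (borel :: ('a \<times> 'a) measure)
      \<and> distr L borel fst = P \<and> distr L borel snd = Q}"

definition W_inf :: "'a::euclidean_space measure \<Rightarrow> 'a measure \<Rightarrow> ereal" where
  "W_inf P Q = (INF L \<in> couplings P Q. esssup L (\<lambda>(x, y). ereal (infnorm (x - y))))"

definition W_ball :: "'a::euclidean_space measure \<Rightarrow> real \<Rightarrow> 'a measure set" where
  "W_ball P0 eps = {P. prob_distr P \<and> W_inf P0 P \<le> ereal eps}"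

definition msupport :: "'a::euclidean_space measure \<Rightarrow> 'a set" where
  "msupport P = {x. \<forall>e>0. emeasure P (ball x e) > 0}"

end

theory Submission
  imports Defs
begin

text \<open>
  Take \<open>P\<close> in the ball. Since the infimum defining \<open>W_inf\<close> need not be attained, we only get, for
  every \<open>\<eta> > 0\<close>, a coupling \<open>L\<close> of \<open>P0\<close> and \<open>P\<close> under which almost surely \<open>x\<close> lies in the support \<open>S\<close> of \<open>P0\<close> and
  \<open>infnorm (y - x) < eps + \<eta>\<close>. Pulling \<open>y\<close> radially towards \<open>x\<close> to a point \<open>y'\<close> with
  \<open>infnorm (y' - x) \<le> eps\<close> changes \<open>l\<close> by less than \<open>\<delta>\<close> (uniform continuity on a compact
  neighbourhood of \<open>S\<close>). By the on-manifold assumption \<open>l y' = l (ginv (g x + (g y' - g x)))\<close>, and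
  \<open>infnorm (g y' - g x) \<le> eps_z\<close>, so \<open>l y' \<le> h x\<close> for the robust loss \<open>h\<close> integrated on the right-hand side. Integrating
  \<open>l y \<le> h x + \<delta>\<close> against \<open>L\<close> and letting \<open>\<delta> \<rightarrow> 0\<close> gives \<open>\<integral> l dP \<le> \<integral> h dP0\<close>.
\<close>

lemma Compl_msupport_eq_Union_null_balls:
  fixes P :: "'a::euclidean_space measure"
  assumes "sets P = sets borel"
  shows "- msupport P = \<Union>{ball z e | z e. 0 < e \<and> emeasure P (ball z e) = 0}"
proof (intro equalityI subsetI)
  fix z assume "z \<in> - msupport P"
  then obtain e where "0 < e" "emeasure P (ball z e) = 0"
    unfolding msupport_def by (auto simp: not_gr_zero)
  then show "z \<in> \<Union>{ball z e | z e. 0 < e \<and> emeasure P (ball z e) = 0}"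
    by (intro UnionI[of "ball z e"]) auto
next
  fix w assume "w \<in> \<Union>{ball z e | z e. 0 < e \<and> emeasure P (ball z e) = 0}"
  then obtain z e where w: "w \<in> ball z e" and null: "emeasure P (ball z e) = 0"
    by auto
  define r where "r = e - dist z w"
  have "0 < r" using w unfolding r_def by simp
  have "ball w r \<subseteq> ball z e"
    unfolding r_def by (simp add: ball_subset_ball_iff dist_commute)
  then have "emeasure P (ball w r) = 0"
    using null emeasure_mono[of "ball w r" "ball z e" P] assms by simp
  with \<open>0 < r\<close> show "w \<in> - msupport P"
    unfolding msupport_def by auto
qed

lemma AE_in_msupport:
  fixes P :: "'a::euclidean_space measure"
  assumes "sets P = sets borel"
  shows "AE x in P. x \<in> msupport P"
proof -
  define F where "F = {ball z e | z e. 0 < e \<and> emeasure P (ball z e) = 0}"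
  have "\<And>B. B \<in> F \<Longrightarrow> open B"
    unfolding F_def by auto
  then obtain F' where F': "F' \<subseteq> F" "countable F'" "\<Union>F' = \<Union>F"
    by (rule Lindelof)
  have "\<And>B. B \<in> F \<Longrightarrow> B \<in> null_sets P"
    unfolding F_def using assms by (auto intro: null_setsI)
  then have "(\<Union>B\<in>F'. B) \<in> null_sets P"
    using F' by (intro null_sets_UN') auto
  moreover have "(\<Union>B\<in>F'. B) = - msupport P"
    using Compl_msupport_eq_Union_null_balls[OF assms] F'(3) by (simp add: F_def)
  ultimately show ?thesis
    by (intro AE_I'[of "- msupport P"]) auto
qed

lemma msupport_nonempty:
  fixes P :: "'a::euclidean_space measure"
  assumes "prob_distr P"
  shows "msupport P \<noteq> {}"
proof
  assume "msupport P = {}"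
  with AE_in_msupport[of P] assms have "AE x in P. False"
    by (simp add: prob_distr_def)
  with assms show False
    unfolding prob_distr_def by (simp add: prob_space.AE_False)
qed

lemma
  shows borel_measurable_fst: "fst \<in> borel_measurable (borel :: ('a::topological_space \<times> 'b::topological_space) measure)"
    and borel_measurable_snd: "snd \<in> borel_measurable (borel :: ('a \<times> 'b) measure)"
  by (intro borel_measurable_continuous_onI continuous_intros)+

lemma borel_measurable_infnorm_diff:
  "(\<lambda>(x, y). ereal (infnorm (x - y))) \<in> borel_measurable (borel :: ('a::euclidean_space \<times> 'a) measure)"
  unfolding case_prod_beta' by (intro borel_measurable_continuous_onI continuous_intros)

lemma self_in_W_ball:
  fixes P :: "'a::euclidean_space measure"
  assumes "prob_distr P" "0 \<le> eps"
  shows "P \<in> W_ball P eps"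
proof -
  have sets_P: "sets P = sets borel" and "prob_space P"
    using assms(1) unfolding prob_distr_def by auto
  define diag where "diag = (\<lambda>x::'a. (x, x))"
  have diag_meas: "diag \<in> measurable P borel"
    unfolding diag_def measurable_cong_sets[OF sets_P refl] by simp
  define L where "L = distr P borel diag"
  have "distr L borel fst = distr P borel (fst \<circ> diag)"
    "distr L borel snd = distr P borel (snd \<circ> diag)"
    unfolding L_def
    by (simp_all add: distr_distr[OF borel_measurable_fst diag_meas]
        distr_distr[OF borel_measurable_snd diag_meas])
  then have "distr L borel fst = P" "distr L borel snd = P"
    using sets_P by (simp_all add: comp_def diag_def distr_id2)
  with \<open>prob_space P\<close> diag_meas have "L \<in> couplings P P"
    unfolding couplings_def L_def by (simp add: prob_space.prob_space_distr)
  moreover have "esssup L (\<lambda>(x, y). ereal (infnorm (x - y))) \<le> 0"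
  proof (rule esssup_I)
    show "(\<lambda>(x, y). ereal (infnorm (x - y))) \<in> borel_measurable L"
      unfolding L_def by (simp add: borel_measurable_infnorm_diff)
    show "AE p in L. (case p of (x, y) \<Rightarrow> ereal (infnorm (x - y))) \<le> 0"
      unfolding L_def
    proof (subst AE_distr_iff[OF diag_meas])
      show "{p \<in> space borel. (case p of (x, y) \<Rightarrow> ereal (infnorm (x - y))) \<le> 0} \<in> sets borel"
        using borel_measurable_infnorm_diff by measurable
    qed (simp add: diag_def infnorm_0)
  qed
  ultimately have "W_inf P P \<le> 0"
    unfolding W_inf_def by (meson INF_lower2)
  with assms show ?thesis
    unfolding W_ball_def by (auto intro: order_trans)
qed

lemma W_inf_le_couplingE:
  fixes P Q :: "'a::euclidean_space measure"
  assumes "W_inf P Q \<le> ereal eps" "0 < \<eta>"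
  obtains L where "L \<in> couplings P Q" "AE p in L. infnorm (fst p - snd p) < eps + \<eta>"
proof -
  have "W_inf P Q < ereal (eps + \<eta>)"
    using assms by (simp add: le_less_trans)
  then obtain L where L: "L \<in> couplings P Q"
    and less: "esssup L (\<lambda>(x, y). ereal (infnorm (x - y))) < ereal (eps + \<eta>)"
    unfolding W_inf_def INF_less_iff by auto
  have "AE p in L. infnorm (fst p - snd p) < eps + \<eta>"
    using esssup_AE[of "\<lambda>(x, y). ereal (infnorm (x - y))" L]
  proof eventually_elim
    case (elim p)
    then have "ereal (infnorm (fst p - snd p)) \<le> esssup L (\<lambda>(x, y). ereal (infnorm (x - y)))"
      by (simp add: case_prod_beta)
    from le_less_trans[OF this less] show ?case
      by simp
  qed
  with L show ?thesis
    by (rule that)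
qed

lemma
  fixes L :: "('a::euclidean_space \<times> 'a) measure"
  assumes "L \<in> couplings P Q"
  shows coupling_fst_measurable: "fst \<in> measurable L borel"
    and coupling_snd_measurable: "snd \<in> measurable L borel"
  using assms borel_measurable_fst borel_measurable_snd unfolding couplings_def
  by (auto simp: measurable_cong_sets[of L borel])

lemma AE_coupling_fst:
  assumes "L \<in> couplings P Q" "{x. A x} \<in> sets borel" "AE x in P. A x"
  shows "AE p in L. A (fst p)"
proof -
  have "distr L borel fst = P"
    using assms(1) unfolding couplings_def by blast
  with assms(3) have "AE x in distr L borel fst. A x"
    by metis
  with assms(2) show ?thesis
    by (simp add: AE_distr_iff[OF coupling_fst_measurable[OF assms(1)]])
qed

lemma integral_mono_coupling:
  fixes f h :: "'a::euclidean_space \<Rightarrow> real"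
  assumes L: "L \<in> couplings P Q"
    and int_h: "integrable P h" and int_f: "integrable Q f"
    and le: "AE p in L. f (snd p) \<le> h (fst p)"
  shows "integral\<^sup>L Q f \<le> integral\<^sup>L P h"
proof -
  have P: "distr L borel fst = P" and Q: "distr L borel snd = Q"
    using L unfolding couplings_def by auto
  note fst = coupling_fst_measurable[OF L] and snd = coupling_snd_measurable[OF L]
  have "sets P = sets borel" "sets Q = sets borel"
    by (simp_all flip: P Q)
  then have h: "h \<in> borel_measurable borel" and f: "f \<in> borel_measurable borel"
    using borel_measurable_integrable[OF int_h] borel_measurable_integrable[OF int_f]
    by (simp_all cong: measurable_cong_sets)
  have "integrable L (\<lambda>p. h (fst p))" "integrable L (\<lambda>p. f (snd p))"
    using int_h int_f
    by (simp_all flip: P Q add: integrable_distr_eq[OF fst h] integrable_distr_eq[OF snd f])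
  then have "(\<integral>p. f (snd p) \<partial>L) \<le> (\<integral>p. h (fst p) \<partial>L)"
    using le by (intro integral_mono_AE)
  then show ?thesis
    by (simp flip: P Q add: integral_distr[OF fst h] integral_distr[OF snd f])
qed

lemma integrable_bounded_borel:
  fixes f :: "'a::euclidean_space \<Rightarrow> real"
  assumes "prob_distr P" "f \<in> borel_measurable borel" "bounded (range f)"
  shows "integrable P f"
proof -
  obtain B where "\<And>x. \<bar>f x\<bar> \<le> B"
    using assms(3) unfolding bounded_real by blast
  moreover have "sets P = sets borel" "finite_measure P"
    using assms(1) unfolding prob_distr_def by (auto intro: prob_space.finite_measure)
  ultimately show ?thesis
    using assms(2) by (intro finite_measure.integrable_const_bound[where M=P and B=B])
      (simp_all cong: measurable_cong_sets)
qed

lemma compact_infnorm_le: "compact {x::'a::euclidean_space. infnorm x \<le> r}"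
  unfolding compact_eq_bounded_closed
proof
  show "bounded {x::'a. infnorm x \<le> r}"
    unfolding bounded_iff
    by (metis (mono_tags) mem_Collect_eq norm_le_infnorm mult_left_mono real_sqrt_ge_zero
        of_nat_0_le_iff order_trans)
  show "closed {x::'a. infnorm x \<le> r}"
    by (intro closed_Collect_le continuous_intros)
qed

lemma cSUP_cSUP_upper:
  fixes f :: "'a \<Rightarrow> 'b \<Rightarrow> 'c::conditionally_complete_lattice"
  assumes "x \<in> A" "y \<in> B" "bdd_above ((\<lambda>(x, y). f x y) ` (A \<times> B))"
  shows "f x y \<le> (SUP x\<in>A. SUP y\<in>B. f x y)"
proof -
  obtain c where c: "\<And>x y. x \<in> A \<Longrightarrow> y \<in> B \<Longrightarrow> f x y \<le> c"
    using assms(3) unfolding bdd_above_def by fastforce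
  then have "bdd_above ((\<lambda>x. SUP y\<in>B. f x y) ` A)"
    using assms(2) by (intro bdd_aboveI2 cSUP_least) auto
  moreover have "f x y \<le> (SUP y\<in>B. f x y)"
    using assms(1,2) c by (intro cSUP_upper bdd_aboveI2) auto
  ultimately show ?thesis
    using assms(1) by (meson cSUP_upper order_trans)
qed

lemma bdd_above_oscillation:
  fixes g :: "'a::euclidean_space \<Rightarrow> 'b::euclidean_space"
  assumes "compact S" "continuous_on UNIV g"
  shows "bdd_above ((\<lambda>(x, dx). infnorm (g x - g (x + dx))) ` (S \<times> {dx. infnorm dx \<le> r}))"
proof -
  have "continuous_on (S \<times> {dx. infnorm dx \<le> r}) (\<lambda>(x, dx). infnorm (g x - g (x + dx)))"
    unfolding case_prod_beta'
    by (intro continuous_intros continuous_on_compose2[OF assms(2)]) auto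
  with assms(1) show ?thesis
    by (intro bounded_imp_bdd_above compact_imp_bounded compact_continuous_image
        compact_Times compact_infnorm_le)
qed

lemma oscillation_upper:
  fixes g :: "'a::euclidean_space \<Rightarrow> 'b::euclidean_space"
  assumes "compact S" "continuous_on UNIV g" "x \<in> S" "infnorm (y - x) \<le> r"
  shows "infnorm (g y - g x) \<le> (SUP x\<in>S. SUP dx\<in>{dx. infnorm dx \<le> r}. infnorm (g x - g (x + dx)))"
  using cSUP_cSUP_upper[where f="\<lambda>x dx. infnorm (g x - g (x + dx))" and y="y - x",
      OF assms(3) _ bdd_above_oscillation[OF assms(1,2)]] assms(4)
  by (simp add: infnorm_sub)

lemma borel_measurable_cSUP_continuous:
  fixes f :: "'i \<Rightarrow> 'a::topological_space \<Rightarrow> real"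
  assumes "K \<noteq> {}" "\<And>i. i \<in> K \<Longrightarrow> continuous_on UNIV (f i)"
    and bdd: "\<And>x. bdd_above ((\<lambda>i. f i x) ` K)"
  shows "(\<lambda>x. SUP i\<in>K. f i x) \<in> borel_measurable borel"
  unfolding borel_measurable_iff_greater
proof
  fix a
  have "{x \<in> space borel. a < (SUP i\<in>K. f i x)} = (\<Union>i\<in>K. {x. a < f i x})"
    using less_cSUP_iff[OF assms(1) bdd] by auto
  moreover have "open {x. a < f i x}" if "i \<in> K" for i
    using assms(2)[OF that] by (intro open_Collect_less continuous_intros) auto
  ultimately show "{x \<in> space borel. a < (SUP i\<in>K. f i x)} \<in> sets borel"
    by (simp add: borel_open open_UN)
qed

lemma integrable_cSUP_continuous:
  fixes f :: "'i \<Rightarrow> 'a::euclidean_space \<Rightarrow> real"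
  assumes "prob_distr P" "K \<noteq> {}" "\<And>i. i \<in> K \<Longrightarrow> continuous_on UNIV (f i)"
    and bound: "\<And>i x. i \<in> K \<Longrightarrow> \<bar>f i x\<bar> \<le> B"
  shows "integrable P (\<lambda>x. SUP i\<in>K. f i x)"
proof -
  have bdd: "bdd_above ((\<lambda>i. f i x) ` K)" for x
    using bound by (intro bdd_aboveI2[of _ _ B]) (simp add: abs_le_iff)
  obtain i0 where "i0 \<in> K"
    using assms(2) by blast
  have "\<bar>SUP i\<in>K. f i x\<bar> \<le> B" for x
  proof -
    have "- B \<le> f i0 x" "f i0 x \<le> (SUP i\<in>K. f i x)"
      using bound[OF \<open>i0 \<in> K\<close>, of x] cSUP_upper[OF \<open>i0 \<in> K\<close> bdd] by auto
    moreover have "(SUP i\<in>K. f i x) \<le> B"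
      using assms(2) bound by (intro cSUP_least) (auto simp: abs_le_iff)
    ultimately show ?thesis
      by linarith
  qed
  then have "bounded (range (\<lambda>x. SUP i\<in>K. f i x))"
    unfolding bounded_real by blast
  with assms(1-3) bdd show ?thesis
    by (intro integrable_bounded_borel borel_measurable_cSUP_continuous)
qed

lemma on_manifold_le_robust_loss:
  fixes g :: "'a \<Rightarrow> 'b::euclidean_space" and l :: "'a \<Rightarrow> real"
  assumes "\<And>x. l x = l (ginv (g x))" "\<And>x. l x \<le> M" "infnorm (g y - g x) \<le> r"
  shows "l y \<le> (SUP dz \<in> {dz. infnorm dz \<le> r}. l (ginv (g x + dz)))"
proof -
  have "l (ginv (g x + (g y - g x))) \<le> (SUP dz \<in> {dz. infnorm dz \<le> r}. l (ginv (g x + dz)))"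
    using assms(2,3) by (intro cSUP_upper bdd_aboveI2[of _ _ M]) auto
  with assms(1)[of y] show ?thesis
    by simp
qed

lemma infnorm_shrink_towards:
  fixes x y :: "'a::euclidean_space"
  assumes "0 < eps" "0 < \<eta>" "infnorm (y - x) < eps + \<eta>"
  obtains y' where "infnorm (y' - x) \<le> eps" "infnorm (y - y') < \<eta>"
proof -
  define t where "t = eps / (eps + \<eta>)"
  have "0 \<le> t" "t < 1"
    using assms(1,2) unfolding t_def by auto
  define y' where "y' = x + t *\<^sub>R (y - x)"
  have "infnorm (y' - x) = t * infnorm (y - x)"
    using \<open>0 \<le> t\<close> by (simp add: y'_def infnorm_mul)
  also have "\<dots> \<le> t * (eps + \<eta>)"
    using assms(3) \<open>0 \<le> t\<close> by (intro mult_left_mono) auto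
  also have "\<dots> = eps"
    using assms(1,2) by (simp add: t_def)
  finally have y'_close: "infnorm (y' - x) \<le> eps" .
  have "y - y' = (1 - t) *\<^sub>R (y - x)"
    by (simp add: y'_def algebra_simps)
  then have "infnorm (y - y') = (1 - t) * infnorm (y - x)"
    using \<open>t < 1\<close> by (simp add: infnorm_mul)
  also have "\<dots> < (1 - t) * (eps + \<eta>)"
    using assms(3) \<open>t < 1\<close> by (intro mult_strict_left_mono) auto
  also have "\<dots> = \<eta>"
    using assms(1,2) by (simp add: t_def field_simps)
  finally have "infnorm (y - y') < \<eta>" .
  with y'_close show ?thesis
    by (rule that)
qed

lemma continuous_infnorm_slack:
  fixes l :: "'a::euclidean_space \<Rightarrow> real"
  assumes "compact S" "continuous_on UNIV l" "0 < eps" "0 < \<delta>"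
  obtains \<eta> where "0 < \<eta>"
    "\<And>x y. x \<in> S \<Longrightarrow> infnorm (y - x) < eps + \<eta> \<Longrightarrow> \<exists>y'. infnorm (y' - x) \<le> eps \<and> l y \<le> l y' + \<delta>"
proof -
  define C where "C = (\<lambda>(x, d). x + d) ` (S \<times> {d. infnorm d \<le> eps + 1})"
  have in_C: "x + d \<in> C" if "x \<in> S" "infnorm d \<le> eps + 1" for x d
    unfolding C_def using that by (intro image_eqI[of _ _ "(x, d)"]) auto
  have "compact C"
    unfolding C_def using assms(1)
    by (intro compact_continuous_image compact_Times compact_infnorm_le)
      (auto simp: case_prod_beta' intro!: continuous_intros)
  then have "uniformly_continuous_on C l"
    using assms(2) by (meson compact_uniformly_continuous continuous_on_subset subset_UNIV)
  then obtain \<eta>0 where "0 < \<eta>0"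
    and \<eta>0: "\<And>x x'. x \<in> C \<Longrightarrow> x' \<in> C \<Longrightarrow> dist x' x < \<eta>0 \<Longrightarrow> dist (l x') (l x) < \<delta>"
    unfolding uniformly_continuous_on_def using assms(4) by metis
  define n where "n = sqrt DIM('a)"
  have "1 \<le> n"
    unfolding n_def by (simp add: DIM_positive Suc_le_eq)
  define \<eta> where "\<eta> = min 1 (\<eta>0 / n)"
  have "0 < \<eta>" "\<eta> \<le> 1" "n * \<eta> \<le> \<eta>0"
    using \<open>0 < \<eta>0\<close> \<open>1 \<le> n\<close> unfolding \<eta>_def by (auto simp: min_def field_simps)
  show ?thesis
  proof (rule that[OF \<open>0 < \<eta>\<close>])
    fix x y
    assume x: "x \<in> S" and y: "infnorm (y - x) < eps + \<eta>"
    obtain y' where y'_close: "infnorm (y' - x) \<le> eps" and "infnorm (y - y') < \<eta>"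
      using infnorm_shrink_towards[OF assms(3) \<open>0 < \<eta>\<close> y] .
    then have "dist y y' < \<eta>0"
      using norm_le_infnorm[of "y - y'"] \<open>1 \<le> n\<close> \<open>n * \<eta> \<le> \<eta>0\<close>
      unfolding dist_norm n_def[symmetric]
      by (smt (verit) mult_strict_left_mono)
    moreover have "y \<in> C" "y' \<in> C"
      using in_C[OF x, of "y - x"] in_C[OF x, of "y' - x"] y y'_close \<open>\<eta> \<le> 1\<close> by auto
    ultimately have "l y \<le> l y' + \<delta>"
      using \<eta>0 by (force simp: dist_real_def)
    with y'_close show "\<exists>y'. infnorm (y' - x) \<le> eps \<and> l y \<le> l y' + \<delta>"
      by blast
  qed
qed

lemma W_ball_integral_le:
  fixes P0 P :: "'a::euclidean_space measure" and l h :: "'a \<Rightarrow> real"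
  assumes P: "P \<in> W_ball P0 eps" and "prob_distr P0" "0 < eps"
    and "compact S" "AE x in P0. x \<in> S"
    and l: "continuous_on UNIV l" "bounded (range l)"
    and "integrable P0 h"
    and l_le_h: "\<And>x y. x \<in> S \<Longrightarrow> infnorm (y - x) \<le> eps \<Longrightarrow> l y \<le> h x"
  shows "integral\<^sup>L P l \<le> integral\<^sup>L P0 h"
proof (rule field_le_epsilon)
  fix \<delta> :: real
  assume "0 < \<delta>"
  obtain \<eta> where "0 < \<eta>" and slack:
    "\<And>x y. x \<in> S \<Longrightarrow> infnorm (y - x) < eps + \<eta> \<Longrightarrow> \<exists>y'. infnorm (y' - x) \<le> eps \<and> l y \<le> l y' + \<delta>"
    using continuous_infnorm_slack[OF \<open>compact S\<close> l(1) \<open>0 < eps\<close> \<open>0 < \<delta>\<close>] by blast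
  have "prob_distr P" "W_inf P0 P \<le> ereal eps"
    using P unfolding W_ball_def by auto
  then obtain L where L: "L \<in> couplings P0 P"
    and close: "AE p in L. infnorm (fst p - snd p) < eps + \<eta>"
    using W_inf_le_couplingE \<open>0 < \<eta>\<close> by blast
  have "AE p in L. fst p \<in> S"
    using \<open>compact S\<close> \<open>AE x in P0. x \<in> S\<close>
    by (intro AE_coupling_fst[OF L]) (simp_all add: borel_closed compact_imp_closed)
  with close have "AE p in L. l (snd p) \<le> h (fst p) + \<delta>"
  proof eventually_elim
    case (elim p)
    then obtain y' where "infnorm (y' - fst p) \<le> eps" "l (snd p) \<le> l y' + \<delta>"
      using slack[of "fst p" "snd p"] by (auto simp: infnorm_sub)
    with elim l_le_h show ?case
      by fastforce
  qed
  moreover have "integrable P l" "integrable P0 (\<lambda>x. h x + \<delta>)"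
    using \<open>prob_distr P\<close> \<open>prob_distr P0\<close> \<open>integrable P0 h\<close> l
    by (auto intro!: integrable_bounded_borel borel_measurable_continuous_onI
        simp: prob_distr_def prob_space.finite_measure finite_measure.integrable_const)
  ultimately have "integral\<^sup>L P l \<le> (\<integral>x. h x + \<delta> \<partial>P0)"
    using L by (intro integral_mono_coupling)
  also have "\<dots> = integral\<^sup>L P0 h + \<delta>"
    using \<open>prob_distr P0\<close> \<open>integrable P0 h\<close>
    by (simp add: prob_distr_def prob_space.finite_measure finite_measure.integrable_const prob_space.prob_space)
  finally show "integral\<^sup>L P l \<le> integral\<^sup>L P0 h + \<delta>" .
qed

theorem lemma1:
  fixes P0 :: "(real ^ 'n) measure"
    and eps M :: real
    and g :: "real ^ 'n \<Rightarrow> real ^ 'm"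
    and ginv :: "real ^ 'm \<Rightarrow> real ^ 'n"
    and l :: "real ^ 'n \<Rightarrow> real"
  assumes "prob_distr P0"
    and "compact (msupport P0)"
    and "eps > 0"
    and "CARD('m) < CARD('n)"
    and "continuous_on UNIV g"
    and "continuous_on UNIV ginv"
    and "continuous_on UNIV l"
    and "\<And>x. 0 \<le> l x \<and> l x \<le> M"
    and "\<And>x. l x = l (ginv (g x))"
  shows "(let eps_z = (SUP x \<in> msupport P0. SUP dx \<in> {dx. infnorm dx \<le> eps}.
                         infnorm (g x - g (x + dx)))
          in (SUP P \<in> W_ball P0 eps. integral\<^sup>L P l)
             \<le> integral\<^sup>L P0 (\<lambda>x. SUP dz \<in> {dz. infnorm dz \<le> eps_z}. l (ginv (g x + dz))))"
proof -
  define S where "S = msupport P0"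
  define eps_z where "eps_z = (SUP x \<in> S. SUP dx \<in> {dx. infnorm dx \<le> eps}. infnorm (g x - g (x + dx)))"
  define h where "h = (\<lambda>x. SUP dz \<in> {dz. infnorm dz \<le> eps_z}. l (ginv (g x + dz)))"
  have osc: "infnorm (g y - g x) \<le> eps_z" if "x \<in> S" "infnorm (y - x) \<le> eps" for x y
    using oscillation_upper[OF assms(2,5)] that unfolding eps_z_def S_def by blast
  then have l_le_h: "l y \<le> h x" if "x \<in> S" "infnorm (y - x) \<le> eps" for x y
    unfolding h_def using assms(8,9) that by (intro on_manifold_le_robust_loss) auto
  obtain x0 where "x0 \<in> S"
    using msupport_nonempty[OF assms(1)] unfolding S_def by blast
  with osc[of x0 x0] assms(3) have "0 \<le> eps_z"
    by (simp add: infnorm_0)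
  then have "integrable P0 h"
    unfolding h_def using assms(1,8)
    by (intro integrable_cSUP_continuous[where B=M] continuous_on_compose2[OF assms(7)]
        continuous_on_compose2[OF assms(6)] continuous_intros assms(5))
      (auto simp: infnorm_0 intro!: exI[of _ 0])
  have "(SUP P \<in> W_ball P0 eps. integral\<^sup>L P l) \<le> integral\<^sup>L P0 h"
  proof (rule cSUP_least)
    show "W_ball P0 eps \<noteq> {}"
      using self_in_W_ball[OF assms(1), of eps] assms(3) by auto
    fix P
    assume "P \<in> W_ball P0 eps"
    moreover have "compact S" "AE x in P0. x \<in> S" "bounded (range l)"
      using assms(1,2,8) AE_in_msupport[of P0] unfolding S_def bounded_real prob_distr_def
      by (auto intro!: exI[of _ M])
    ultimately show "integral\<^sup>L P l \<le> integral\<^sup>L P0 h"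
      using assms(1,3,7) \<open>integrable P0 h\<close> l_le_h by (intro W_ball_integral_le)
  qed
  then show ?thesis
    by (simp add: S_def eps_z_def h_def)
qed

end
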